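(* Let $(\mathbb S,+,\cdot)$ be an S-Ring. Then $(\mathbb S,\cdot)$ is not associative.
   Context: An S-Structure is a triple $(\mathbb S,+,\cdot)$ where $\mathbb S$ is a set and $+,\cdot$ are binary operations on $\mathbb S$ such that: $(\mathbb S,+)$ is a commutative group with identity $0$ (the inverse of $s$ is written $-s$, and $s-t:=s+(-t)$); $\mathbb S$ is closed under $\cdot$; and there exists $s\in\mathbb S$ with $0\cdot s\neq 0$ or $s\cdot 0\neq 0$. Multiplication binds tighter than addition. The structures considered come with a distinguished element of $\mathbb S$ denoted $1$. It is Commutative if $s\cdot t=t\cdot s$ for all $s,t$. For a Commutative S-Structure and $\alpha\in\mathbb S$, put $\mathbb S_\alpha=\{s\in\mathbb S:0\cdot s=s\cdot 0=\alpha\}$ and $\Lambda=\{\alpha\in\mathbb S:\mathbb S_\alpha\neq\emptyset\}$. Wheel Distributive: $s\cdot(t+r)+(s\cdot 0)=(s\cdot t)+(s\cdot r)$ for all $s,t,r\in\mathbb S$. S-Associative: for all $m,n\in\mathbb S_0$ and $s\in\mathbb S$, $m\cdot(n\cdot s)=(m\cdot n)\cdot s-([(m-1)\cdot(n-1)]\cdot(0\cdot s))$. Base: if $\mathbb S_0\neq\emptyset$ and $\alpha\in\Lambda$, $q\in\mathbb S_\alpha$ is a Base for $\mathbb S_\alpha$ if $q+\beta\in\mathbb S_\alpha$ for all $\beta\in\mathbb S_0$ and every $s\in\mathbb S_\alpha$ equals $q+\beta$ for some $\beta\in\mathbb S_0$. Coordinated: $\mathbb S_0\neq\emptyset$ and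 every $\mathbb S_\alpha$ with $\alpha\in\Lambda$ has a Base. Standard Bases: a Coordinated Commutative S-Structure has Standard Bases if there is a specified element $q_0(1)\in\mathbb S_1$ which is a Base for $\mathbb S_1$, and for every $\alpha\in\Lambda$ the element $q_0(\alpha):=\alpha\cdot(q_0(1)+1)-1$ lies in $\mathbb S_\alpha$ and is a Base for $\mathbb S_\alpha$. An Essential S-Structure is an S-Structure that is Commutative, Wheel Distributive, S-Associative, has Standard Bases (in particular is Coordinated), satisfies $0,1\in\mathbb S_0$, and satisfies $\mathbb S_0=\{1\cdot x:x\in\mathbb S_0\}$. A Unity is an element $e\in\Lambda$ with $e\cdot s=s\cdot e=s$ for all $s\in\mathbb S$. An S-Ring is an Essential S-Structure which has a Unity. *)

theory Defs
  imports Main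
begin

definition s_structure ::
  "'a set \<Rightarrow> ('a \<Rightarrow> 'a \<Rightarrow> 'a) \<Rightarrow> ('a \<Rightarrow> 'a \<Rightarrow> 'a) \<Rightarrow> 'a \<Rightarrow> ('a \<Rightarrow> 'a) \<Rightarrow> 'a \<Rightarrow> bool" where
  "s_structure S add mul zero neg one \<longleftrightarrow>
     (\<forall>x\<in>S. \<forall>y\<in>S. add x y \<in> S) \<and>
     (\<forall>x\<in>S. \<forall>y\<in>S. \<forall>z\<in>S. add (add x y) z = add x (add y z)) \<and>
     (\<forall>x\<in>S. \<forall>y\<in>S. add x y = add y x) \<and>
     zero \<in> S \<and> (\<forall>x\<in>S. add zero x = x) \<and>
     (\<forall>x\<in>S. neg x \<in> S \<and> add x (neg x) = zero) \<and>
     (\<forall>x\<in>S. \<forall>y\<in>S. mul x y \<in> S) \<and>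
     (\<exists>s\<in>S. mul zero s \<noteq> zero \<or> mul s zero \<noteq> zero) \<and>
     one \<in> S"

definition s_sub :: "('a \<Rightarrow> 'a \<Rightarrow> 'a) \<Rightarrow> ('a \<Rightarrow> 'a) \<Rightarrow> 'a \<Rightarrow> 'a \<Rightarrow> 'a" where
  "s_sub add neg x y = add x (neg y)"

definition s_commutative :: "'a set \<Rightarrow> ('a \<Rightarrow> 'a \<Rightarrow> 'a) \<Rightarrow> bool" where
  "s_commutative S mul \<longleftrightarrow> (\<forall>s\<in>S. \<forall>t\<in>S. mul s t = mul t s)"

definition S_alpha :: "'a set \<Rightarrow> ('a \<Rightarrow> 'a \<Rightarrow> 'a) \<Rightarrow> 'a \<Rightarrow> 'a \<Rightarrow> 'a set" where
  "S_alpha S mul zero \<alpha> = {s \<in> S. mul zero s = \<alpha> \<and> mul s zero = \<alpha>}"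

definition Lambda_set :: "'a set \<Rightarrow> ('a \<Rightarrow> 'a \<Rightarrow> 'a) \<Rightarrow> 'a \<Rightarrow> 'a set" where
  "Lambda_set S mul zero = {\<alpha> \<in> S. S_alpha S mul zero \<alpha> \<noteq> {}}"

definition wheel_distributive ::
  "'a set \<Rightarrow> ('a \<Rightarrow> 'a \<Rightarrow> 'a) \<Rightarrow> ('a \<Rightarrow> 'a \<Rightarrow> 'a) \<Rightarrow> 'a \<Rightarrow> bool" where
  "wheel_distributive S add mul zero \<longleftrightarrow>
     (\<forall>s\<in>S. \<forall>t\<in>S. \<forall>r\<in>S. add (mul s (add t r)) (mul s zero) = add (mul s t) (mul s r))"

definition s_associative ::
  "'a set \<Rightarrow> ('a \<Rightarrow> 'a \<Rightarrow> 'a) \<Rightarrow> ('a \<Rightarrow> 'a \<Rightarrow> 'a) \<Rightarrow> 'a \<Rightarrow> ('a \<Rightarrow> 'a) \<Rightarrow> 'a \<Rightarrow> bool" where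
  "s_associative S add mul zero neg one \<longleftrightarrow>
     (\<forall>m\<in>S_alpha S mul zero zero. \<forall>n\<in>S_alpha S mul zero zero. \<forall>s\<in>S.
        mul m (mul n s) =
        s_sub add neg (mul (mul m n) s)
          (mul (mul (s_sub add neg m one) (s_sub add neg n one)) (mul zero s)))"

definition is_base ::
  "'a set \<Rightarrow> ('a \<Rightarrow> 'a \<Rightarrow> 'a) \<Rightarrow> ('a \<Rightarrow> 'a \<Rightarrow> 'a) \<Rightarrow> 'a \<Rightarrow> 'a \<Rightarrow> 'a \<Rightarrow> bool" where
  "is_base S add mul zero \<alpha> q \<longleftrightarrow>
     q \<in> S_alpha S mul zero \<alpha> \<and>
     (\<forall>\<beta>\<in>S_alpha S mul zero zero. add q \<beta> \<in> S_alpha S mul zero \<alpha>) \<and>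
     (\<forall>s\<in>S_alpha S mul zero \<alpha>. \<exists>\<beta>\<in>S_alpha S mul zero zero. s = add q \<beta>)"

definition coordinated ::
  "'a set \<Rightarrow> ('a \<Rightarrow> 'a \<Rightarrow> 'a) \<Rightarrow> ('a \<Rightarrow> 'a \<Rightarrow> 'a) \<Rightarrow> 'a \<Rightarrow> bool" where
  "coordinated S add mul zero \<longleftrightarrow>
     S_alpha S mul zero zero \<noteq> {} \<and>
     (\<forall>\<alpha>\<in>Lambda_set S mul zero. \<exists>q. is_base S add mul zero \<alpha> q)"

definition standard_bases ::
  "'a set \<Rightarrow> ('a \<Rightarrow> 'a \<Rightarrow> 'a) \<Rightarrow> ('a \<Rightarrow> 'a \<Rightarrow> 'a) \<Rightarrow> 'a \<Rightarrow> ('a \<Rightarrow> 'a) \<Rightarrow> 'a \<Rightarrow> 'a \<Rightarrow> bool" where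
  "standard_bases S add mul zero neg one q01 \<longleftrightarrow>
     coordinated S add mul zero \<and>
     q01 \<in> S_alpha S mul zero one \<and> is_base S add mul zero one q01 \<and>
     (\<forall>\<alpha>\<in>Lambda_set S mul zero.
        s_sub add neg (mul \<alpha> (add q01 one)) one \<in> S_alpha S mul zero \<alpha> \<and>
        is_base S add mul zero \<alpha> (s_sub add neg (mul \<alpha> (add q01 one)) one))"

definition essential_s_structure ::
  "'a set \<Rightarrow> ('a \<Rightarrow> 'a \<Rightarrow> 'a) \<Rightarrow> ('a \<Rightarrow> 'a \<Rightarrow> 'a) \<Rightarrow> 'a \<Rightarrow> ('a \<Rightarrow> 'a) \<Rightarrow> 'a \<Rightarrow> bool" where
  "essential_s_structure S add mul zero neg one \<longleftrightarrow>
     s_structure S add mul zero neg one \<and>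
     s_commutative S mul \<and>
     wheel_distributive S add mul zero \<and>
     s_associative S add mul zero neg one \<and>
     (\<exists>q01. standard_bases S add mul zero neg one q01) \<and>
     zero \<in> S_alpha S mul zero zero \<and> one \<in> S_alpha S mul zero zero \<and>
     S_alpha S mul zero zero = {mul one x | x. x \<in> S_alpha S mul zero zero}"

definition is_unity :: "'a set \<Rightarrow> ('a \<Rightarrow> 'a \<Rightarrow> 'a) \<Rightarrow> 'a \<Rightarrow> 'a \<Rightarrow> bool" where
  "is_unity S mul zero e \<longleftrightarrow>
     e \<in> Lambda_set S mul zero \<and> (\<forall>s\<in>S. mul e s = s \<and> mul s e = s)"

definition s_ring ::
  "'a set \<Rightarrow> ('a \<Rightarrow> 'a \<Rightarrow> 'a) \<Rightarrow> ('a \<Rightarrow> 'a \<Rightarrow> 'a) \<Rightarrow> 'a \<Rightarrow> ('a \<Rightarrow> 'a) \<Rightarrow> 'a \<Rightarrow> bool" where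
  "s_ring S add mul zero neg one \<longleftrightarrow>
     essential_s_structure S add mul zero neg one \<and> (\<exists>e. is_unity S mul zero e)"

end

theory Submission
  imports Defs
begin

text \<open>In an S-Structure, S-Associativity with \<open>m = n = 1\<close> reads
  \<open>1\<cdot>(1\<cdot>s) = (1\<cdot>1)\<cdot>s - (0\<cdot>0)\<cdot>(0\<cdot>s)\<close>. If \<open>\<cdot>\<close> were associative, the two products
  \<open>1\<cdot>(1\<cdot>s)\<close> and \<open>(1\<cdot>1)\<cdot>s\<close> agree, so \<open>(0\<cdot>0)\<cdot>(0\<cdot>s) = 0\<close>; since \<open>0\<cdot>0 = 0\<close>, associativity
  once more turns this into \<open>0\<cdot>s = 0\<close> for every \<open>s\<close>. With commutativity this
  contradicts the axiom that \<open>0\<cdot>s \<noteq> 0\<close> or \<open>s\<cdot>0 \<noteq> 0\<close> for some \<open>s\<close>.\<close>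

lemma s_structure_sub_eq_self_imp_zero:
  assumes "s_structure S add mul zero neg one" "x \<in> S" "y \<in> S" "s_sub add neg x y = x"
  shows "y = zero"
proof -
  have assoc: "\<forall>x\<in>S. \<forall>y\<in>S. \<forall>z\<in>S. add (add x y) z = add x (add y z)"
   and comm: "\<forall>x\<in>S. \<forall>y\<in>S. add x y = add y x"
   and zero: "zero \<in> S" "\<forall>x\<in>S. add zero x = x"
   and neg: "\<forall>x\<in>S. neg x \<in> S \<and> add x (neg x) = zero"
    using assms(1) unfolding s_structure_def by auto
  have neg_y: "add (neg y) y = zero" and neg_x: "add (neg x) x = zero"
    using comm neg assms(2,3) by metis+
  have x_zero: "add x zero = x"
    using comm zero assms(2) by metis
  have "add x y = add (add x (neg y)) y"
    using assms(4) unfolding s_sub_def by simp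
  also have "\<dots> = add x (add (neg y) y)"
    using assoc neg assms(2,3) by auto
  finally have x_plus_y: "add x y = x"
    using neg_y x_zero by simp
  have "y = add (add (neg x) x) y"
    using neg_x zero assms(3) by simp
  also have "\<dots> = add (neg x) (add x y)"
    using assoc neg assms(2,3) by auto
  also have "\<dots> = zero"
    using x_plus_y neg_x by simp
  finally show ?thesis .
qed

lemma s_associative_mul_assoc_imp_zero_mul:
  assumes struct: "s_structure S add mul zero neg one"
    and s_assoc: "s_associative S add mul zero neg one"
    and zero_S0: "zero \<in> S_alpha S mul zero zero" and one_S0: "one \<in> S_alpha S mul zero zero"
    and mul_assoc: "\<forall>x\<in>S. \<forall>y\<in>S. \<forall>z\<in>S. mul (mul x y) z = mul x (mul y z)"
    and s: "s \<in> S"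
  shows "mul zero s = zero"
proof -
  have S: "zero \<in> S" "one \<in> S" and mul_closed: "\<forall>x\<in>S. \<forall>y\<in>S. mul x y \<in> S"
    and neg: "\<forall>x\<in>S. neg x \<in> S \<and> add x (neg x) = zero"
    using struct unfolding s_structure_def by auto
  have zero_zero: "mul zero zero = zero"
    using zero_S0 unfolding S_alpha_def by auto
  have "s_sub add neg one one = zero"
    using neg S unfolding s_sub_def by auto
  then have "mul one (mul one s) =
      s_sub add neg (mul (mul one one) s) (mul (mul zero zero) (mul zero s))"
    using s_assoc one_S0 s unfolding s_associative_def by (metis (no_types, lifting))
  then have "s_sub add neg (mul (mul one one) s) (mul (mul zero zero) (mul zero s))
      = mul (mul one one) s"
    using mul_assoc S s by auto
  then have "mul (mul zero zero) (mul zero s) = zero"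
    by (rule s_structure_sub_eq_self_imp_zero[OF struct, rotated 2]) (use mul_closed S s in auto)
  moreover have "mul (mul zero zero) (mul zero s) = mul zero s"
    using mul_assoc S s zero_zero by metis
  ultimately show ?thesis by simp
qed

lemma essential_s_structure_mul_not_assoc:
  assumes "essential_s_structure S add mul zero neg one"
  shows "\<not> (\<forall>x\<in>S. \<forall>y\<in>S. \<forall>z\<in>S. mul (mul x y) z = mul x (mul y z))"
proof
  assume mul_assoc: "\<forall>x\<in>S. \<forall>y\<in>S. \<forall>z\<in>S. mul (mul x y) z = mul x (mul y z)"
  have struct: "s_structure S add mul zero neg one" and comm: "s_commutative S mul"
    and s_assoc: "s_associative S add mul zero neg one"
    and S0: "zero \<in> S_alpha S mul zero zero" "one \<in> S_alpha S mul zero zero"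
    using assms unfolding essential_s_structure_def by auto
  obtain s where s: "s \<in> S" and "mul zero s \<noteq> zero \<or> mul s zero \<noteq> zero"
    using struct unfolding s_structure_def by auto
  moreover have "mul zero s = zero"
    using s_associative_mul_assoc_imp_zero_mul[OF struct s_assoc _ _ mul_assoc s] S0 .
  moreover have "zero \<in> S"
    using struct unfolding s_structure_def by auto
  ultimately show False
    using comm unfolding s_commutative_def by metis
qed

theorem corollary3p2p2:
  fixes S :: "'a set" and add mul :: "'a \<Rightarrow> 'a \<Rightarrow> 'a" and zero one :: 'a and neg :: "'a \<Rightarrow> 'a"
  assumes "s_ring S add mul zero neg one"
  shows "\<not> (\<forall>x\<in>S. \<forall>y\<in>S. \<forall>z\<in>S. mul (mul x y) z = mul x (mul y z))"
proof -
  have "essential_s_structure S add mul zero neg one"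
    using assms unfolding s_ring_def by simp
  then show ?thesis
    by (rule essential_s_structure_mul_not_assoc)
qed

end
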